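(* Let $n\geq 1$, $m=\frac{n^2+n}{2}$, and let $z:\mathbb{R}^n\to\mathbb{R}^m$ be the map $z(x)=\begin{bmatrix}x_1^2 & x_1x_2 & \cdots & x_1x_n & x_2^2 & x_2x_3 & \cdots & x_n^2\end{bmatrix}^\top$ listing all quadratic monomials of $x$. Let $E=E^\top\in\mathbb{R}^{n\times n}$ be positive definite, $\alpha>0$, and $\mathcal{E}_\alpha=\{x : x^\top E x\leq\alpha^2\}$. Let $c_1,c_2,c_3\in\mathbb{R}^n$ be three nonzero, linearly independent vectors with $c_3$ orthogonal to both $c_1$ and $c_2$, and define $\phi(x)=x^\top Q x$ with $Q=\frac12(c_1c_2^\top+c_2c_1^\top)+c_3c_3^\top$. Then there exists $b\in\mathbb{R}^m$ such that $\phi(x)=b^\top z(x)$ for all $x$. Moreover, letting $W$ be either $(c_1^\top E^{-1}c_1)\,c_2c_2^\top$ or $(c_2^\top E^{-1}c_2)\,c_1c_1^\top$, and $\gamma=\lambda_{\max}\!\left(E^{-1/2}(2Q-c_3c_3^\top)E^{-1/2}\right)$, we have $$\begin{bmatrix} x\\ w\end{bmatrix}^\top\begin{bmatrix}\alpha^2 (W+\gamma c_3c_3^\top) & 0\\ 0 & -bb^\top\end{bmatrix}\begin{bmatrix} x\\ w\end{bmatrix}\geq 0\quad\text{for all } x\in\mathcal{E}_\alpha,\ w=z(x).$$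
   Context: $\lambda_{\max}(\cdot)$ denotes the largest eigenvalue of a real symmetric matrix, and $E^{-1/2}$ is the inverse of the symmetric positive definite square root of $E$. *)

theory Defs
  imports "HOL-Analysis.Analysis"
begin

definition outer :: "real^'n \<Rightarrow> real^'n \<Rightarrow> real^'n^'n" where
  "outer u v = (\<chi> i j. u$i * v$j)"

definition sym_mat :: "real^'n^'n \<Rightarrow> bool" where
  "sym_mat A \<longleftrightarrow> transpose A = A"

definition pos_def :: "real^'n^'n \<Rightarrow> bool" where
  "pos_def A \<longleftrightarrow> sym_mat A \<and> (\<forall>x. x \<noteq> 0 \<longrightarrow> x \<bullet> (A *v x) > 0)"

definition eigenvalue :: "real^'n^'n \<Rightarrow> real \<Rightarrow> bool" where
  "eigenvalue A l \<longleftrightarrow> (\<exists>v. v \<noteq> 0 \<and> A *v v = l *\<^sub>R v)"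

definition lambda_max :: "real^'n^'n \<Rightarrow> real" where
  "lambda_max A = Max {l. eigenvalue A l}"

definition psd_sqrt :: "real^'n^'n \<Rightarrow> real^'n^'n" where
  "psd_sqrt E = (THE S. pos_def S \<and> S ** S = E)"

definition inv_sqrt :: "real^'n^'n \<Rightarrow> real^'n^'n" where
  "inv_sqrt E = matrix_inv (psd_sqrt E)"

text \<open>Index set of the quadratic monomials x_i x_j with i \<le> j (m = n(n+1)/2 of them),
  ordered lexicographically; vectors in R^m are functions on this index set.\<close>
definition mono_idx :: "('n::{finite,linorder} \<times> 'n) set" where
  "mono_idx = {(i,j). i \<le> j}"

definition zmap :: "real^('n::{finite,linorder}) \<Rightarrow> ('n \<times> 'n \<Rightarrow> real)" where
  "zmap x = (\<lambda>(i,j). if i \<le> j then x$i * x$j else 0)"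

definition ellipsoid :: "real^'n^'n \<Rightarrow> real \<Rightarrow> (real^'n) set" where
  "ellipsoid E \<alpha> = {x. x \<bullet> (E *v x) \<le> \<alpha>^2}"

end

theory Submission
  imports Defs
begin

(* With a_i = c_i^T x one has phi(x) = a1 a2 + a3^2, x^T (2Q - c3 c3^T) x = 2 a1 a2 + a3^2 and
   w^T b b^T w = phi(x)^2 for w = z(x), so the claim is
     (a1 a2 + a3^2)^2 = a1^2 a2^2 + a3^2 (2 a1 a2 + a3^2) <= alpha^2 (K a2^2 + gamma a3^2),
   where K = c1^T E^-1 c1. On the ellipsoid, Cauchy-Schwarz for the inner product given by E yields
   a1^2 <= K alpha^2, and the generalized Rayleigh bound x^T A x <= lambda_max(E^-1/2 A E^-1/2) x^T E x
   yields 2 a1 a2 + a3^2 <= gamma alpha^2; here gamma >= 0 because c3 is orthogonal to c1 and c2, so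
   that c3^T A c3 > 0. The argument is symmetric in c1 and c2, which covers both choices of W. *)

lemma outer_mult_vec [simp]: "outer u v *v x = (v \<bullet> x) *\<^sub>R u"
  by (simp add: vec_eq_iff outer_def matrix_vector_mult_def inner_vec_def sum_distrib_left
      mult.commute mult.left_commute)

lemma sym_mat_inner:
  fixes A :: "real^'n^'n"
  assumes "sym_mat A"
  shows "(A *v x) \<bullet> y = x \<bullet> (A *v y)"
  by (metis assms dot_lmul_matrix sym_mat_def transpose_matrix_vector)

lemma sym_matI:
  fixes A :: "real^'n^'n"
  assumes "\<And>x y. (A *v x) \<bullet> y = x \<bullet> (A *v y)"
  shows "sym_mat A"
proof -
  have "transpose A *v x = A *v x" for x
    using vector_eq_rdot assms by (metis dot_lmul_matrix transpose_matrix_vector)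
  then show ?thesis unfolding sym_mat_def by (simp add: matrix_eq)
qed

lemma matrix_inv_mult:
  fixes A :: "real^'n^'n"
  assumes "invertible A"
  shows "A ** matrix_inv A = mat 1" "matrix_inv A ** A = mat 1"
  using someI_ex[OF assms[unfolded invertible_def]] unfolding matrix_inv_def by auto

lemma sym_mat_pos_def: "pos_def A \<Longrightarrow> sym_mat A"
  by (simp add: pos_def_def)

lemma pos_def_quadratic_pos: "pos_def A \<Longrightarrow> x \<noteq> 0 \<Longrightarrow> 0 < x \<bullet> (A *v x)"
  by (simp add: pos_def_def)

lemma pos_def_invertible:
  fixes P :: "real^'n^'n"
  assumes "pos_def P"
  shows "invertible P"
proof -
  have "P *v x = 0 \<Longrightarrow> x = 0" for x
    using pos_def_quadratic_pos[OF assms, of x] by force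
  then show ?thesis
    using matrix_left_invertible_ker invertible_left_inverse by blast
qed

lemma pos_def_matrix_inv_form_nonneg:
  fixes E :: "real^'n^'n"
  assumes "pos_def E"
  shows "0 \<le> c \<bullet> (matrix_inv E *v c)"
proof -
  define u where "u = matrix_inv E *v c"
  have "c = E *v u"
    using matrix_inv_mult(1)[OF pos_def_invertible[OF assms]]
    by (simp add: u_def matrix_vector_mul_assoc)
  then have "c \<bullet> (matrix_inv E *v c) = u \<bullet> (E *v u)"
    by (simp add: u_def inner_commute)
  also have "\<dots> \<ge> 0"
    using pos_def_quadratic_pos[OF assms, of u] by (cases "u = 0") auto
  finally show ?thesis .
qed

definition orthonormal_basis :: "'a::real_inner set \<Rightarrow> bool" where
  "orthonormal_basis B \<longleftrightarrow>
     finite B \<and> pairwise orthogonal B \<and> (\<forall>b\<in>B. norm b = 1) \<and> span B = UNIV"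

lemma orthonormal_basis_sum_inner:
  assumes "orthonormal_basis B"
  shows "(\<Sum>b\<in>B. (x \<bullet> b) *\<^sub>R b) = x"
  using assms orthonormal_basis_expand[of B x] unfolding orthonormal_basis_def by auto

lemma orthonormal_basis_inner:
  assumes "orthonormal_basis B" "b \<in> B" "b' \<in> B"
  shows "b \<bullet> b' = (if b = b' then 1 else 0)"
  using assms unfolding orthonormal_basis_def pairwise_def orthogonal_def by (auto simp: norm_eq_1)

lemma orthonormal_basis_nonzero_coeff:
  assumes "orthonormal_basis B" "x \<noteq> 0"
  obtains b where "b \<in> B" "x \<bullet> b \<noteq> 0"
  using orthonormal_basis_sum_inner[OF assms(1), of x] assms(2)
  by (metis (no_types, lifting) scale_eq_0_iff sum.neutral)

lemma orthonormal_basis_inner_self: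
  assumes "orthonormal_basis B"
  shows "x \<bullet> x = (\<Sum>b\<in>B. (x \<bullet> b)\<^sup>2)"
proof -
  have "x \<bullet> x = x \<bullet> (\<Sum>b\<in>B. (x \<bullet> b) *\<^sub>R b)"
    using orthonormal_basis_sum_inner[OF assms] by simp
  then show ?thesis by (simp add: inner_sum_right power2_eq_square)
qed

section \<open>The spectral theorem for symmetric matrices\<close>

lemma quadratic_nonneg_imp_linear_coeff_zero:
  fixes p r :: real
  assumes nonneg: "\<And>t. 0 \<le> 2 * t * p + t\<^sup>2 * r"
  shows "p = 0"
proof (cases "r \<le> 0")
  case True
  have "0 \<le> - 2 * p\<^sup>2 + p\<^sup>2 * r"
    using nonneg[of "- p"] by (simp add: power2_eq_square)
  moreover have "p\<^sup>2 * r \<le> 0"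
    using True by (simp add: mult_nonneg_nonpos)
  ultimately have "p\<^sup>2 \<le> 0" by linarith
  then show ?thesis by simp
next
  case False
  have "2 * (- p / r) * p + (- p / r)\<^sup>2 * r = - p\<^sup>2 / r"
    using False by (simp add: power2_eq_square field_simps)
  then have "0 \<le> - p\<^sup>2 / r"
    using nonneg[of "- p / r"] by simp
  with False show ?thesis
    by (simp add: divide_le_0_iff)
qed

lemma psd_form_zero_imp_orthogonal:
  fixes f :: "'a::real_inner \<Rightarrow> 'a"
  assumes "linear f" and sym: "\<And>x y. f x \<bullet> y = x \<bullet> f y" and "subspace V"
    and psd: "\<And>x. x \<in> V \<Longrightarrow> 0 \<le> x \<bullet> f x"
    and "v \<in> V" "v \<bullet> f v = 0" "u \<in> V"
  shows "u \<bullet> f v = 0"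
proof (rule quadratic_nonneg_imp_linear_coeff_zero)
  fix t :: real
  have "v + t *\<^sub>R u \<in> V"
    using \<open>subspace V\<close> \<open>v \<in> V\<close> \<open>u \<in> V\<close> by (simp add: subspace_add subspace_mul)
  then have "0 \<le> (v + t *\<^sub>R u) \<bullet> f (v + t *\<^sub>R u)"
    by (rule psd)
  also have "\<dots> = 2 * t * (u \<bullet> f v) + t\<^sup>2 * (u \<bullet> f u)"
    using \<open>v \<bullet> f v = 0\<close> sym[of v u] linear_add[OF \<open>linear f\<close>] linear_scale[OF \<open>linear f\<close>]
    by (simp add: inner_add_left inner_add_right inner_commute power2_eq_square algebra_simps)
  finally show "0 \<le> 2 * t * (u \<bullet> f v) + t\<^sup>2 * (u \<bullet> f u)" .
qed

text \<open>The maximum \<open>\<mu>\<close> of the Rayleigh quotient on \<open>V\<close> makes \<open>\<mu> I - M\<close> positive semidefinite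
  on \<open>V\<close> with a null vector at the maximiser, which is therefore an eigenvector.\<close>

lemma invariant_subspace_has_eigenvector:
  fixes M :: "real^'n^'n"
  assumes "sym_mat M" "subspace V" "\<And>x. x \<in> V \<Longrightarrow> M *v x \<in> V" "V \<noteq> {0}"
  obtains v \<mu> where "v \<in> V" "norm v = 1" "M *v v = \<mu> *\<^sub>R v"
proof -
  define K where "K = V \<inter> sphere 0 1"
  define q where "q x = x \<bullet> (M *v x)" for x :: "real^'n"
  obtain y where "y \<in> V" "y \<noteq> 0"
    using assms(2,4) subspace_0 by blast
  then have "y /\<^sub>R norm y \<in> K"
    using assms(2) by (simp add: K_def subspace_mul)
  moreover have "compact K"
    unfolding K_def by (metis assms(2) closed_subspace compact_sphere compact_Int_closed inf_commute)
  moreover have "continuous_on K q"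
    unfolding q_def by (intro continuous_intros linear_continuous_on matrix_vector_mul_bounded_linear)
  ultimately obtain v where "v \<in> K" and v_max: "\<And>x. x \<in> K \<Longrightarrow> q x \<le> q v"
    using continuous_attains_sup[of K q] by blast
  then have "v \<in> V" "norm v = 1" by (auto simp: K_def)
  define f where "f x = q v *\<^sub>R x - M *v x" for x
  have "linear f"
    unfolding f_def
    by (rule linearI) (simp_all add: matrix_vector_right_distrib matrix_vector_mult_scaleR algebra_simps)
  have f_sym: "f x \<bullet> y = x \<bullet> f y" for x y
    unfolding f_def using sym_mat_inner[OF assms(1)] by (simp add: inner_diff_left inner_diff_right)
  have f_psd: "0 \<le> x \<bullet> f x" if "x \<in> V" for x
  proof (cases "x = 0")
    case False
    then have "x /\<^sub>R norm x \<in> K"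
      using that assms(2) by (simp add: K_def subspace_mul)
    then have "q (x /\<^sub>R norm x) \<le> q v" by (rule v_max)
    moreover have "q (x /\<^sub>R norm x) = q x / (norm x)\<^sup>2"
      by (simp add: q_def power2_eq_square matrix_vector_mult_scaleR divide_inverse)
    ultimately have "q x \<le> q v * (norm x)\<^sup>2"
      using False by (simp add: divide_le_eq)
    then show ?thesis
      by (simp add: f_def q_def inner_diff_right power2_norm_eq_inner)
  qed (simp add: f_def)
  have "v \<bullet> f v = 0"
    using \<open>norm v = 1\<close> by (simp add: f_def q_def inner_diff_right power2_norm_eq_inner[symmetric])
  moreover have "f v \<in> V"
    unfolding f_def using \<open>v \<in> V\<close> assms(2,3) by (simp add: subspace_diff subspace_mul)
  ultimately have "f v \<bullet> f v = 0"
    using psd_form_zero_imp_orthogonal[OF \<open>linear f\<close> f_sym assms(2) f_psd \<open>v \<in> V\<close>] by blast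
  then have "M *v v = q v *\<^sub>R v"
    by (simp add: f_def)
  with \<open>v \<in> V\<close> \<open>norm v = 1\<close> that show ?thesis by blast
qed

lemma invariant_subspace_orthonormal_eigenbasis:
  fixes M :: "real^'n^'n"
  assumes "sym_mat M" "subspace V" "\<forall>x\<in>V. M *v x \<in> V"
  shows "\<exists>B. finite B \<and> B \<subseteq> V \<and> pairwise orthogonal B \<and>
    (\<forall>b\<in>B. norm b = 1 \<and> (\<exists>\<mu>. M *v b = \<mu> *\<^sub>R b)) \<and> span B = V"
  using assms(2,3)
proof (induction "dim V" arbitrary: V rule: less_induct)
  case less
  show ?case
  proof (cases "V = {0}")
    case True
    then show ?thesis by (intro exI[of _ "{}"]) auto
  next
    case False
    then obtain v \<mu> where v: "v \<in> V" "norm v = 1" "M *v v = \<mu> *\<^sub>R v"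
      using invariant_subspace_has_eigenvector[OF assms(1) less.prems(1)] less.prems(2) by blast
    define V' where "V' = {x \<in> V. x \<bullet> v = 0}"
    have "subspace V'"
      using less.prems(1) unfolding V'_def subspace_def by (auto simp: inner_add_left)
    moreover have "\<forall>x\<in>V'. M *v x \<in> V'"
      using less.prems(2) v(3) sym_mat_inner[OF assms(1)] by (simp add: V'_def)
    moreover have "dim V' < dim V"
    proof -
      have "v \<notin> V'"
        using v(2) by (simp add: V'_def power2_norm_eq_inner[symmetric])
      then have "V' \<subset> V" using v(1) V'_def by blast
      then show ?thesis
        using dim_psubset[of V' V] span_eq_iff[THEN iffD2, OF \<open>subspace V'\<close>]
          span_eq_iff[THEN iffD2, OF less.prems(1)] by simp
    qed
    ultimately obtain B' where B': "finite B'" "B' \<subseteq> V'" "pairwise orthogonal B'"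
        "\<forall>b\<in>B'. norm b = 1 \<and> (\<exists>\<mu>. M *v b = \<mu> *\<^sub>R b)" "span B' = V'"
      using less.hyps by blast
    have "V \<subseteq> span (insert v B')"
    proof
      fix x assume "x \<in> V"
      then have "x - (x \<bullet> v) *\<^sub>R v \<in> span B'"
        using v less.prems(1) B'(5)
        by (simp add: V'_def subspace_diff subspace_mul inner_diff_left power2_norm_eq_inner[symmetric])
      then have "(x - (x \<bullet> v) *\<^sub>R v) + (x \<bullet> v) *\<^sub>R v \<in> span (insert v B')"
        by (meson span_add span_base span_mono span_mul insertI1 subset_insertI subsetD)
      then show "x \<in> span (insert v B')" by simp
    qed
    moreover have "span (insert v B') \<subseteq> V"
      using span_minimal[of "insert v B'" V] B'(2) v(1) less.prems(1) V'_def by blast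
    moreover have "pairwise orthogonal (insert v B')"
      using B'(2,3) unfolding pairwise_insert orthogonal_def V'_def by (auto simp: inner_commute)
    ultimately show ?thesis
      using B' v V'_def by (intro exI[of _ "insert v B'"]) auto
  qed
qed

theorem sym_mat_orthonormal_eigenbasis:
  fixes M :: "real^'n^'n"
  assumes "sym_mat M"
  obtains B \<mu> where "orthonormal_basis B" "\<And>b. b \<in> B \<Longrightarrow> M *v b = \<mu> b *\<^sub>R b"
proof -
  obtain B where "orthonormal_basis B" "\<forall>b\<in>B. \<exists>\<mu>. M *v b = \<mu> *\<^sub>R b"
    using invariant_subspace_orthonormal_eigenbasis[OF assms, of UNIV]
    unfolding orthonormal_basis_def by auto
  then show ?thesis using that by metis
qed

lemma eigenbasis_mult_vec:
  fixes M :: "real^'n^'n"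
  assumes "orthonormal_basis B" "\<And>b. b \<in> B \<Longrightarrow> M *v b = \<mu> b *\<^sub>R b"
  shows "M *v x = (\<Sum>b\<in>B. (\<mu> b * (x \<bullet> b)) *\<^sub>R b)"
proof -
  have "M *v x = M *v (\<Sum>b\<in>B. (x \<bullet> b) *\<^sub>R b)"
    using orthonormal_basis_sum_inner[OF assms(1)] by simp
  also have "\<dots> = (\<Sum>b\<in>B. (x \<bullet> b) *\<^sub>R (M *v b))"
    by (simp add: linear_sum[OF matrix_vector_mul_linear] matrix_vector_mult_scaleR)
  also have "\<dots> = (\<Sum>b\<in>B. (\<mu> b * (x \<bullet> b)) *\<^sub>R b)"
    using assms(2) by (intro sum.cong) (auto simp: mult.commute)
  finally show ?thesis .
qed

lemma eigenbasis_quadratic_form: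
  fixes M :: "real^'n^'n"
  assumes "orthonormal_basis B" "\<And>b. b \<in> B \<Longrightarrow> M *v b = \<mu> b *\<^sub>R b"
  shows "x \<bullet> (M *v x) = (\<Sum>b\<in>B. \<mu> b * (x \<bullet> b)\<^sup>2)"
  using eigenbasis_mult_vec[OF assms, of x]
  by (simp add: inner_sum_right power2_eq_square algebra_simps inner_commute)

section \<open>The positive definite square root\<close>

lemma sum_matrix_mult_vec: "(\<Sum>i\<in>I. A i) *v x = (\<Sum>i\<in>I. A i *v x)"
  by (induction I rule: infinite_finite_induct) (auto simp: matrix_vector_mult_add_rdistrib)

lemma sum_outer_mult_vec:
  "(\<Sum>b\<in>B. \<sigma> b *\<^sub>R outer b b) *v x = (\<Sum>b\<in>B. (\<sigma> b * (b \<bullet> x)) *\<^sub>R b)"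
  by (simp add: sum_matrix_mult_vec scaleR_matrix_vector_assoc[symmetric])

lemma sym_mat_sum_outer: "sym_mat (\<Sum>b\<in>B. \<sigma> b *\<^sub>R outer b b)"
  by (rule sym_matI) (simp add: sum_outer_mult_vec inner_sum_left inner_sum_right inner_commute mult_ac)

lemma sum_outer_eigenvector:
  assumes "orthonormal_basis B" "v \<in> B"
  shows "(\<Sum>b\<in>B. \<sigma> b *\<^sub>R outer b b) *v v = \<sigma> v *\<^sub>R v"
proof -
  have "(\<Sum>b\<in>B. \<sigma> b *\<^sub>R outer b b) *v v = (\<Sum>b\<in>B. if b = v then \<sigma> v *\<^sub>R v else 0)"
    unfolding sum_outer_mult_vec using orthonormal_basis_inner[OF assms(1) _ assms(2)]
    by (intro sum.cong) auto
  then show ?thesis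
    using assms by (simp add: orthonormal_basis_def)
qed

lemma pos_def_eigenvalue_pos:
  fixes E :: "real^'n^'n"
  assumes "pos_def E" "orthonormal_basis B" "b \<in> B" "E *v b = \<mu> *\<^sub>R b"
  shows "\<mu> > 0"
proof -
  have "norm b = 1" using assms(2,3) by (simp add: orthonormal_basis_def)
  then have "b \<noteq> 0" by auto
  then have "0 < b \<bullet> (E *v b)" by (rule pos_def_quadratic_pos[OF assms(1)])
  also have "\<dots> = \<mu>" using \<open>norm b = 1\<close> assms(4) by (simp add: norm_eq_1)
  finally show ?thesis .
qed

lemma pos_def_sqrt_exists:
  fixes E :: "real^'n^'n"
  assumes "pos_def E"
  shows "\<exists>S. pos_def S \<and> S ** S = E"
proof -
  obtain B \<mu> where B: "orthonormal_basis B" and eig: "\<And>b. b \<in> B \<Longrightarrow> E *v b = \<mu> b *\<^sub>R b"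
    using sym_mat_orthonormal_eigenbasis[OF sym_mat_pos_def[OF assms]] by blast
  have \<mu>_pos: "\<mu> b > 0" if "b \<in> B" for b
    using pos_def_eigenvalue_pos[OF assms B that eig[OF that]] .
  define S where "S = (\<Sum>b\<in>B. sqrt (\<mu> b) *\<^sub>R outer b b)"
  have S_eig: "S *v b = sqrt (\<mu> b) *\<^sub>R b" if "b \<in> B" for b
    unfolding S_def using sum_outer_eigenvector[OF B that] .
  have SS_eig: "(S ** S) *v b = \<mu> b *\<^sub>R b" if "b \<in> B" for b
    using S_eig[OF that] \<mu>_pos[OF that]
    by (simp add: matrix_vector_mul_assoc[symmetric] matrix_vector_mult_scaleR)
  then have "S ** S = E"
    using eigenbasis_mult_vec[OF B SS_eig] eigenbasis_mult_vec[OF B eig] by (simp add: matrix_eq)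
  moreover have "pos_def S"
    unfolding pos_def_def
  proof (intro conjI allI impI)
    show "sym_mat S" unfolding S_def by (rule sym_mat_sum_outer)
    fix x :: "real^'n" assume "x \<noteq> 0"
    then obtain b0 where b0: "b0 \<in> B" "x \<bullet> b0 \<noteq> 0"
      using orthonormal_basis_nonzero_coeff[OF B] by blast
    have "0 < (\<Sum>b\<in>B. sqrt (\<mu> b) * (x \<bullet> b)\<^sup>2)"
      using B b0 \<mu>_pos
      by (intro sum_pos2[OF _ b0(1)]) (auto simp: orthonormal_basis_def less_imp_le)
    also have "\<dots> = x \<bullet> (S *v x)"
      using eigenbasis_quadratic_form[OF B S_eig] by simp
    finally show "x \<bullet> (S *v x) > 0" .
  qed
  ultimately show ?thesis by blast
qed

lemma pos_def_sqrt_unique: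
  fixes S T :: "real^'n^'n"
  assumes S: "pos_def S" and T: "pos_def T" and eq: "S ** S = T ** T"
  shows "S = T"
proof -
  have sym_S: "sym_mat S" and sym_T: "sym_mat T" using S T by (simp_all add: sym_mat_pos_def)
  define D where "D = S - T"
  have D_mult: "D *v x = S *v x - T *v x" for x
    unfolding D_def by (simp add: matrix_vector_mult_diff_rdistrib)
  have "sym_mat D"
    by (rule sym_matI)
      (simp add: D_mult inner_diff_left inner_diff_right sym_mat_inner[OF sym_S] sym_mat_inner[OF sym_T])
  then obtain B \<delta> where B: "orthonormal_basis B" and eig: "\<And>b. b \<in> B \<Longrightarrow> D *v b = \<delta> b *\<^sub>R b"
    using sym_mat_orthonormal_eigenbasis by blast
  have "\<delta> b = 0" if "b \<in> B" for b
    \<comment> \<open>\<open>S D + D T = S\<^sup>2 - T\<^sup>2 = 0\<close>, and testing this against \<open>b\<close> gives \<open>\<delta> b (b\<^sup>T S b + b\<^sup>T T b) = 0\<close>.\<close>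
  proof -
    have "b \<noteq> 0" using B that by (auto simp: orthonormal_basis_def)
    then have pos: "b \<bullet> (S *v b) + b \<bullet> (T *v b) > 0"
      using pos_def_quadratic_pos[OF S] pos_def_quadratic_pos[OF T] by (simp add: add_pos_pos)
    have "S *v (D *v b) + D *v (T *v b) = S *v (S *v b) - T *v (T *v b)"
      by (simp add: D_mult matrix_vector_mult_diff_distrib)
    also have "\<dots> = 0"
      using eq by (simp add: matrix_vector_mul_assoc)
    finally have "b \<bullet> (S *v (D *v b) + D *v (T *v b)) = 0" by simp
    then have "b \<bullet> (S *v (D *v b)) + b \<bullet> (D *v (T *v b)) = 0"
      by (simp only: inner_add_right)
    moreover have "b \<bullet> (D *v (T *v b)) = \<delta> b * (b \<bullet> (T *v b))"
      using sym_mat_inner[OF \<open>sym_mat D\<close>, of b "T *v b"] eig[OF that] by simp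
    ultimately have "\<delta> b * (b \<bullet> (S *v b) + b \<bullet> (T *v b)) = 0"
      using eig[OF that] by (simp add: matrix_vector_mult_scaleR algebra_simps)
    with pos show ?thesis by simp
  qed
  then have "S *v x = T *v x" for x
    using eigenbasis_mult_vec[OF B eig, of x] by (simp add: D_mult)
  then show ?thesis by (simp add: matrix_eq)
qed

lemma psd_sqrt_spec:
  fixes E :: "real^'n^'n"
  assumes "pos_def E"
  shows "pos_def (psd_sqrt E)" "psd_sqrt E ** psd_sqrt E = E"
proof -
  obtain S where S: "pos_def S \<and> S ** S = E"
    using pos_def_sqrt_exists[OF assms] by blast
  have "\<exists>!S. pos_def S \<and> S ** S = E"
    using S pos_def_sqrt_unique by (intro ex1I[of _ S]) auto
  from theI'[OF this] show "pos_def (psd_sqrt E)" "psd_sqrt E ** psd_sqrt E = E"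
    unfolding psd_sqrt_def by auto
qed

lemma inv_sqrt_mult_vec:
  fixes E :: "real^'n^'n"
  assumes "pos_def E"
  shows "psd_sqrt E *v (inv_sqrt E *v y) = y" "inv_sqrt E *v (psd_sqrt E *v y) = y"
  using matrix_inv_mult[OF pos_def_invertible[OF psd_sqrt_spec(1)[OF assms]]]
  by (simp_all add: inv_sqrt_def matrix_vector_mul_assoc)

lemma sym_mat_inv_sqrt:
  fixes E :: "real^'n^'n"
  assumes "pos_def E"
  shows "sym_mat (inv_sqrt E)"
proof (rule sym_matI)
  fix x y
  let ?S = "psd_sqrt E" and ?R = "inv_sqrt E"
  have sym_S: "sym_mat ?S" by (rule sym_mat_pos_def[OF psd_sqrt_spec(1)[OF assms]])
  have "(?R *v x) \<bullet> y = (?R *v x) \<bullet> (?S *v (?R *v y))" by (simp add: inv_sqrt_mult_vec[OF assms])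
  also have "\<dots> = x \<bullet> (?R *v y)"
    using sym_mat_inner[OF sym_S, of "?R *v x" "?R *v y"] by (simp add: inv_sqrt_mult_vec[OF assms])
  finally show "(?R *v x) \<bullet> y = x \<bullet> (?R *v y)" .
qed

section \<open>Quadratic forms on an ellipsoid\<close>

lemma eigenvalues_eq_eigenbasis_image:
  fixes M :: "real^'n^'n"
  assumes "sym_mat M" "orthonormal_basis B" and eig: "\<And>b. b \<in> B \<Longrightarrow> M *v b = \<mu> b *\<^sub>R b"
  shows "{l. eigenvalue M l} = \<mu> ` B"
proof (intro equalityI subsetI)
  fix l assume "l \<in> {l. eigenvalue M l}"
  then obtain w where w: "w \<noteq> 0" "M *v w = l *\<^sub>R w" by (auto simp: eigenvalue_def)
  obtain b where b: "b \<in> B" "w \<bullet> b \<noteq> 0"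
    using orthonormal_basis_nonzero_coeff[OF assms(2) w(1)] by blast
  have "l * (w \<bullet> b) = (M *v w) \<bullet> b" using w(2) by simp
  also have "\<dots> = \<mu> b * (w \<bullet> b)" using sym_mat_inner[OF assms(1)] eig[OF b(1)] by simp
  finally show "l \<in> \<mu> ` B" using b by simp
next
  fix l assume "l \<in> \<mu> ` B"
  then obtain b where "b \<in> B" "l = \<mu> b" by blast
  moreover have "b \<noteq> 0" using assms(2) \<open>b \<in> B\<close> by (auto simp: orthonormal_basis_def)
  ultimately show "l \<in> {l. eigenvalue M l}" using eig by (auto simp: eigenvalue_def)
qed

lemma rayleigh_le_lambda_max:
  fixes M :: "real^'n^'n"
  assumes "sym_mat M"
  shows "x \<bullet> (M *v x) \<le> lambda_max M * (x \<bullet> x)"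
proof -
  obtain B \<mu> where B: "orthonormal_basis B" and eig: "\<And>b. b \<in> B \<Longrightarrow> M *v b = \<mu> b *\<^sub>R b"
    using sym_mat_orthonormal_eigenbasis[OF assms] by blast
  have "lambda_max M = Max (\<mu> ` B)"
    using eigenvalues_eq_eigenbasis_image[OF assms B eig] by (simp add: lambda_max_def)
  then have le_max: "\<mu> b \<le> lambda_max M" if "b \<in> B" for b
    using B that by (simp add: orthonormal_basis_def)
  have "x \<bullet> (M *v x) = (\<Sum>b\<in>B. \<mu> b * (x \<bullet> b)\<^sup>2)"
    by (rule eigenbasis_quadratic_form[OF B eig])
  also have "\<dots> \<le> (\<Sum>b\<in>B. lambda_max M * (x \<bullet> b)\<^sup>2)"
    using le_max by (intro sum_mono mult_right_mono) auto
  also have "\<dots> = lambda_max M * (x \<bullet> x)"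
    by (simp add: orthonormal_basis_inner_self[OF B] sum_distrib_left)
  finally show ?thesis .
qed

lemma quadratic_form_le_lambda_max_congruence:
  fixes E A :: "real^'n^'n"
  assumes "pos_def E" "sym_mat A"
  shows "x \<bullet> (A *v x) \<le> lambda_max (inv_sqrt E ** A ** inv_sqrt E) * (x \<bullet> (E *v x))"
proof -
  let ?S = "psd_sqrt E" and ?R = "inv_sqrt E"
  have sym_S: "sym_mat ?S" by (rule sym_mat_pos_def[OF psd_sqrt_spec(1)[OF assms(1)]])
  have M_mult: "(?R ** A ** ?R) *v y = ?R *v (A *v (?R *v y))" for y
    by (simp add: matrix_vector_mul_assoc matrix_mul_assoc)
  have "sym_mat (?R ** A ** ?R)"
    by (rule sym_matI) (simp add: M_mult sym_mat_inner[OF sym_mat_inv_sqrt[OF assms(1)]]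
        sym_mat_inner[OF assms(2)])
  then have "(?S *v x) \<bullet> ((?R ** A ** ?R) *v (?S *v x))
      \<le> lambda_max (?R ** A ** ?R) * ((?S *v x) \<bullet> (?S *v x))"
    by (rule rayleigh_le_lambda_max)
  moreover have "(?S *v x) \<bullet> ((?R ** A ** ?R) *v (?S *v x)) = x \<bullet> (A *v x)"
    using sym_mat_inner[OF sym_S, of x "?R *v (A *v x)"]
    by (simp add: M_mult inv_sqrt_mult_vec[OF assms(1)] inner_commute)
  moreover have "(?S *v x) \<bullet> (?S *v x) = x \<bullet> (E *v x)"
    using sym_mat_inner[OF sym_S, of x "?S *v x"] psd_sqrt_spec(2)[OF assms(1)]
    by (simp add: matrix_vector_mul_assoc)
  ultimately show ?thesis by simp
qed

lemma Cauchy_Schwarz_pos_def: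
  fixes E :: "real^'n^'n"
  assumes "pos_def E"
  shows "(c \<bullet> x)\<^sup>2 \<le> (c \<bullet> (matrix_inv E *v c)) * (x \<bullet> (E *v x))"
proof -
  let ?S = "psd_sqrt E"
  have sym_S: "sym_mat ?S" by (rule sym_mat_pos_def[OF psd_sqrt_spec(1)[OF assms]])
  have E_inner: "y \<bullet> (E *v z) = (?S *v y) \<bullet> (?S *v z)" for y z
    using sym_mat_inner[OF sym_S, of y "?S *v z"] psd_sqrt_spec(2)[OF assms]
    by (simp add: matrix_vector_mul_assoc)
  define u where "u = matrix_inv E *v c"
  have "E *v u = c"
    using matrix_inv_mult(1)[OF pos_def_invertible[OF assms]] by (simp add: u_def matrix_vector_mul_assoc)
  then have "c \<bullet> x = (?S *v u) \<bullet> (?S *v x)" and "c \<bullet> u = (?S *v u) \<bullet> (?S *v u)"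
    using E_inner[of u x] E_inner[of u u] sym_mat_inner[OF sym_mat_pos_def[OF assms], of u] by auto
  then show ?thesis
    using Cauchy_Schwarz_ineq[of "?S *v u" "?S *v x"] E_inner[of x x] by (simp add: u_def)
qed

lemma ellipsoid_inner_square_le:
  fixes E :: "real^'n^'n"
  assumes "pos_def E" "x \<in> ellipsoid E \<alpha>"
  shows "(c \<bullet> x)\<^sup>2 \<le> (c \<bullet> (matrix_inv E *v c)) * \<alpha>\<^sup>2"
proof -
  have "(c \<bullet> x)\<^sup>2 \<le> (c \<bullet> (matrix_inv E *v c)) * (x \<bullet> (E *v x))"
    by (rule Cauchy_Schwarz_pos_def[OF assms(1)])
  also have "\<dots> \<le> (c \<bullet> (matrix_inv E *v c)) * \<alpha>\<^sup>2"
    using assms(2) pos_def_matrix_inv_form_nonneg[OF assms(1)] by (simp add: ellipsoid_def mult_left_mono)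
  finally show ?thesis .
qed

lemma ellipsoid_quadratic_form_le:
  fixes E A :: "real^'n^'n"
  assumes "pos_def E" "sym_mat A" "y \<bullet> (A *v y) > 0" "x \<in> ellipsoid E \<alpha>"
  shows "x \<bullet> (A *v x) \<le> lambda_max (inv_sqrt E ** A ** inv_sqrt E) * \<alpha>\<^sup>2"
proof -
  let ?\<gamma> = "lambda_max (inv_sqrt E ** A ** inv_sqrt E)"
  have "y \<noteq> 0" using assms(3) by auto
  then have "y \<bullet> (E *v y) > 0" by (rule pos_def_quadratic_pos[OF assms(1)])
  moreover have "0 < ?\<gamma> * (y \<bullet> (E *v y))"
    using assms(3) quadratic_form_le_lambda_max_congruence[OF assms(1,2)] by (rule less_le_trans)
  ultimately have "?\<gamma> \<ge> 0" by (simp add: zero_less_mult_iff)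
  have "x \<bullet> (A *v x) \<le> ?\<gamma> * (x \<bullet> (E *v x))"
    by (rule quadratic_form_le_lambda_max_congruence[OF assms(1,2)])
  also have "\<dots> \<le> ?\<gamma> * \<alpha>\<^sup>2"
    using \<open>?\<gamma> \<ge> 0\<close> assms(4) by (simp add: ellipsoid_def mult_left_mono)
  finally show ?thesis .
qed

lemma product_plus_square_le:
  fixes a1 a2 a3 K \<gamma> \<alpha> :: real
  assumes "a1\<^sup>2 \<le> K * \<alpha>\<^sup>2" "2 * a1 * a2 + a3\<^sup>2 \<le> \<gamma> * \<alpha>\<^sup>2"
  shows "(a1 * a2 + a3\<^sup>2)\<^sup>2 \<le> \<alpha>\<^sup>2 * (K * a2\<^sup>2 + \<gamma> * a3\<^sup>2)"
proof -
  have "(a1 * a2 + a3\<^sup>2)\<^sup>2 = a1\<^sup>2 * a2\<^sup>2 + a3\<^sup>2 * (2 * a1 * a2 + a3\<^sup>2)"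
    by (simp add: power2_eq_square algebra_simps)
  also have "\<dots> \<le> K * \<alpha>\<^sup>2 * a2\<^sup>2 + a3\<^sup>2 * (\<gamma> * \<alpha>\<^sup>2)"
    using assms by (intro add_mono mult_right_mono mult_left_mono) auto
  finally show ?thesis by (simp add: algebra_simps)
qed

lemma ellipsoid_product_plus_square_le:
  fixes E :: "real^'n^'n"
  assumes "pos_def E" "x \<in> ellipsoid E \<alpha>" "c3 \<noteq> 0" "c3 \<bullet> c1 = 0" "c3 \<bullet> c2 = 0"
  defines "\<gamma> \<equiv> lambda_max (inv_sqrt E ** (outer c1 c2 + outer c2 c1 + outer c3 c3) ** inv_sqrt E)"
  shows "((c1 \<bullet> x) * (c2 \<bullet> x) + (c3 \<bullet> x)\<^sup>2)\<^sup>2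
    \<le> \<alpha>\<^sup>2 * ((c1 \<bullet> (matrix_inv E *v c1)) * (c2 \<bullet> x)\<^sup>2 + \<gamma> * (c3 \<bullet> x)\<^sup>2)"
proof -
  let ?A = "outer c1 c2 + outer c2 c1 + outer c3 c3"
  have A_form: "y \<bullet> (?A *v y) = 2 * (c1 \<bullet> y) * (c2 \<bullet> y) + (c3 \<bullet> y)\<^sup>2" for y
    by (simp add: matrix_vector_mult_add_rdistrib inner_add_right inner_commute power2_eq_square)
  have "sym_mat ?A"
    by (rule sym_matI)
      (simp add: matrix_vector_mult_add_rdistrib inner_add_left inner_add_right inner_commute mult_ac)
  moreover have "c3 \<bullet> (?A *v c3) > 0"
    using A_form[of c3] assms(3-5) by (simp add: inner_commute)
  ultimately have "2 * (c1 \<bullet> x) * (c2 \<bullet> x) + (c3 \<bullet> x)\<^sup>2 \<le> \<gamma> * \<alpha>\<^sup>2"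
    using ellipsoid_quadratic_form_le[OF assms(1) _ _ assms(2)] A_form unfolding \<gamma>_def by metis
  then show ?thesis
    by (rule product_plus_square_le[OF ellipsoid_inner_square_le[OF assms(1,2)]])
qed

section \<open>Quadratic monomials\<close>

definition monomial_coeffs :: "real^'n^'n \<Rightarrow> 'n \<times> 'n \<Rightarrow> real" where
  "monomial_coeffs Q = (\<lambda>(i,j). if i = j then Q$i$i else Q$i$j + Q$j$i)"

lemma quadratic_form_eq_monomial_sum:
  fixes Q :: "real^('n::{finite,linorder})^('n::{finite,linorder})"
  shows "x \<bullet> (Q *v x) = (\<Sum>p\<in>mono_idx. monomial_coeffs Q p * zmap x p)"
proof -
  define h where "h = (\<lambda>(i::'n, j). Q$i$j * x$i * x$j)"
  define L where "L = {(i::'n, j). j < i}"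
  have "x \<bullet> (Q *v x) = (\<Sum>p\<in>UNIV. h p)"
    by (simp add: inner_vec_def matrix_vector_mult_def sum_distrib_left h_def
        sum.cartesian_product[symmetric] UNIV_Times_UNIV[symmetric] algebra_simps del: UNIV_Times_UNIV)
  also have "\<dots> = (\<Sum>p\<in>mono_idx. h p) + (\<Sum>p\<in>L. h p)"
    by (subst sum.union_disjoint[symmetric]) (auto simp: mono_idx_def L_def intro: sum.cong)
  also have "(\<Sum>p\<in>L. h p) = (\<Sum>p\<in>{(i, j). i < j}. h (prod.swap p))"
    by (rule sum.reindex_bij_witness[of _ prod.swap prod.swap]) (auto simp: L_def)
  also have "\<dots> = (\<Sum>p\<in>mono_idx. if fst p < snd p then h (prod.swap p) else 0)"
    by (rule sum.mono_neutral_cong_left) (auto simp: mono_idx_def)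
  also have "(\<Sum>p\<in>mono_idx. h p) + \<dots> = (\<Sum>p\<in>mono_idx. monomial_coeffs Q p * zmap x p)"
    by (subst sum.distrib[symmetric], rule sum.cong)
      (auto simp: mono_idx_def monomial_coeffs_def zmap_def h_def algebra_simps)
  finally show ?thesis .
qed

lemma double_sum_neg_product:
  fixes w b :: "'a \<Rightarrow> real"
  shows "(\<Sum>p\<in>A. \<Sum>q\<in>A. w p * (- (b p * b q)) * w q) = - (\<Sum>p\<in>A. b p * w p)\<^sup>2"
  by (simp add: power2_eq_square sum_product sum_negf mult_ac)

theorem theorem3:
  fixes E :: "real^('n::{finite,linorder})^('n::{finite,linorder})"
    and \<alpha> :: real
    and c1 c2 c3 :: "real^('n::{finite,linorder})"
    and Q :: "real^('n::{finite,linorder})^('n::{finite,linorder})"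
    and \<phi> :: "real^('n::{finite,linorder}) \<Rightarrow> real"
  assumes E_pd: "pos_def E"
    and \<alpha>_pos: "\<alpha> > 0"
    and nz: "c1 \<noteq> 0" "c2 \<noteq> 0" "c3 \<noteq> 0"
    and distinct: "c1 \<noteq> c2" "c1 \<noteq> c3" "c2 \<noteq> c3"
    and indep: "independent {c1, c2, c3}"
    and orth: "c3 \<bullet> c1 = 0" "c3 \<bullet> c2 = 0"
    and Q_def: "Q = (1/2) *\<^sub>R (outer c1 c2 + outer c2 c1) + outer c3 c3"
    and \<phi>_def: "\<phi> = (\<lambda>x. x \<bullet> (Q *v x))"
  shows "\<exists>b :: 'n \<times> 'n \<Rightarrow> real.
           (\<forall>x. \<phi> x = (\<Sum>p\<in>mono_idx. b p * zmap x p)) \<and>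
           (\<forall>W \<gamma>. (W = (c1 \<bullet> (matrix_inv E *v c1)) *\<^sub>R outer c2 c2 \<or>
                    W = (c2 \<bullet> (matrix_inv E *v c2)) *\<^sub>R outer c1 c1) \<longrightarrow>
                   \<gamma> = lambda_max (inv_sqrt E ** (2 *\<^sub>R Q - outer c3 c3) ** inv_sqrt E) \<longrightarrow>
              (\<forall>x w. x \<in> ellipsoid E \<alpha> \<longrightarrow> w = zmap x \<longrightarrow>
                 x \<bullet> ((\<alpha>^2 *\<^sub>R (W + \<gamma> *\<^sub>R outer c3 c3)) *v x)
                 + (\<Sum>p\<in>mono_idx. \<Sum>q\<in>mono_idx. w p * (- (b p * b q)) * w q) \<ge> 0))"
proof (intro exI[of _ "monomial_coeffs Q"] conjI allI impI)
  have A_eq: "2 *\<^sub>R Q - outer c3 c3 = outer c1 c2 + outer c2 c1 + outer c3 c3"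
    unfolding Q_def by (simp add: scaleR_add_right scaleR_2 add.assoc)
  have \<phi>_form: "\<phi> x = (c1 \<bullet> x) * (c2 \<bullet> x) + (c3 \<bullet> x)\<^sup>2" for x
    unfolding \<phi>_def Q_def by (simp add: matrix_vector_mult_add_rdistrib scaleR_matrix_vector_assoc[symmetric]
        inner_add_right inner_commute power2_eq_square algebra_simps)
  show \<phi>_monomial: "\<phi> x = (\<Sum>p\<in>mono_idx. monomial_coeffs Q p * zmap x p)" for x
    unfolding \<phi>_def by (rule quadratic_form_eq_monomial_sum)
  fix W \<gamma> x w
  assume W: "W = (c1 \<bullet> (matrix_inv E *v c1)) *\<^sub>R outer c2 c2 \<or>
             W = (c2 \<bullet> (matrix_inv E *v c2)) *\<^sub>R outer c1 c1"
    and \<gamma>: "\<gamma> = lambda_max (inv_sqrt E ** (2 *\<^sub>R Q - outer c3 c3) ** inv_sqrt E)"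
    and x: "x \<in> ellipsoid E \<alpha>" and w: "w = zmap x"
  have "(\<phi> x)\<^sup>2 \<le> \<alpha>\<^sup>2 * (x \<bullet> (W *v x) + \<gamma> * (c3 \<bullet> x)\<^sup>2)"
    using W ellipsoid_product_plus_square_le[OF E_pd x nz(3) orth]
      ellipsoid_product_plus_square_le[OF E_pd x nz(3) orth(2,1)]
    by (auto simp: \<gamma> A_eq \<phi>_form add.commute mult_ac scaleR_matrix_vector_assoc[symmetric]
        inner_commute power2_eq_square)
  moreover have "(\<Sum>p\<in>mono_idx. \<Sum>q\<in>mono_idx. w p * (- (monomial_coeffs Q p * monomial_coeffs Q q)) * w q)
      = - (\<phi> x)\<^sup>2"
    unfolding w \<phi>_monomial by (rule double_sum_neg_product)
  moreover have "x \<bullet> ((\<alpha>^2 *\<^sub>R (W + \<gamma> *\<^sub>R outer c3 c3)) *v x)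
      = \<alpha>\<^sup>2 * (x \<bullet> (W *v x) + \<gamma> * (c3 \<bullet> x)\<^sup>2)"
    by (simp add: matrix_vector_mult_add_rdistrib scaleR_matrix_vector_assoc[symmetric]
        inner_add_right inner_commute power2_eq_square algebra_simps)
  ultimately show "x \<bullet> ((\<alpha>^2 *\<^sub>R (W + \<gamma> *\<^sub>R outer c3 c3)) *v x)
      + (\<Sum>p\<in>mono_idx. \<Sum>q\<in>mono_idx. w p * (- (monomial_coeffs Q p * monomial_coeffs Q q)) * w q) \<ge> 0"
    by linarith
qed

end
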